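(* For $n\geqslant1$ and $m,f\geqslant0$, let $\mathfrak{i}_{n,m,f}$ be the number of inversion sequences $\sigma$ of length $n$ avoiding both $010$ and $210$, with maximum value $m$ and $\mathrm{forb}(\sigma,\{010,210\})=f$. Then for all $n\geqslant 1$, $m\geqslant 1$ and $0\leqslant f\leqslant m+1$, $$\mathfrak{i}_{n,m,f}=\sum_{p=m+1}^{n}\sum_{i=0}^{f-1}\sum_{j=0}^{m-1}\mathfrak{i}_{p-1,j,i}\cdot\mathfrak{h}_{n-p,\,f-i-1},$$ where $\mathfrak{h}_{a,b}$ is the number of words of length $a$ over $\{1,\dots,b\}\sqcup\{\infty\}$ ($\infty$ the largest letter) avoiding $010$ whose subword obtained by deleting the letters $\infty$ is nondecreasing with maximum $b$ (or is empty, when $b=0$); in particular $\mathfrak{h}_{0,0}=1$ and $\mathfrak{h}_{0,b}=0$ for $b\geqslant1$.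
   Context: An inversion sequence of length $n$ is a sequence $(\sigma_1,\dots,\sigma_n)$ of integers with $0\leqslant\sigma_i<i$. A sequence contains a pattern $p$ if some subsequence is order-isomorphic to $p$; otherwise it avoids $p$. Avoiding $010$: no $i<j<l$ with $\sigma_i=\sigma_l<\sigma_j$. Avoiding $210$: no $i<j<l$ with $\sigma_i>\sigma_j>\sigma_l$. For a sequence $\sigma$ avoiding a set of patterns $P$, a value $v\in\{0,\dots,\max(\sigma)\}$ is forbidden if the sequence $\sigma$ followed by $M$ and then $v$ contains some pattern of $P$, where $M>\max(\sigma)$; $\mathrm{forb}(\sigma,P)$ is the number of forbidden values. *)

theory Defs
  imports Main
begin

text \<open>Inversion sequences are 0-indexed lists: entry k (position k+1) satisfies s!k \<le> k.\<close>
definition inv_seq :: "nat \<Rightarrow> nat list \<Rightarrow> bool" where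
  "inv_seq n s \<longleftrightarrow> length s = n \<and> (\<forall>k<n. s ! k < Suc k)"

definition order_iso :: "nat list \<Rightarrow> nat list \<Rightarrow> bool" where
  "order_iso u v \<longleftrightarrow> length u = length v \<and>
     (\<forall>a<length u. \<forall>b<length u. (u!a < u!b \<longleftrightarrow> v!a < v!b) \<and> (u!a = u!b \<longleftrightarrow> v!a = v!b))"

definition contains :: "nat list \<Rightarrow> nat list \<Rightarrow> bool" where
  "contains w p \<longleftrightarrow> (\<exists>idx. length idx = length p \<and> sorted_wrt (<) idx \<and>
      (\<forall>k\<in>set idx. k < length w) \<and> order_iso (map ((!) w) idx) p)"

definition avoids :: "nat list set \<Rightarrow> nat list \<Rightarrow> bool" where
  "avoids P w \<longleftrightarrow> (\<forall>p\<in>P. \<not> contains w p)"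

definition pat010 :: "nat list" where "pat010 = [0,1,0]"
definition pat210 :: "nat list" where "pat210 = [2,1,0]"

text \<open>Forbidden values; M is taken to be max + 1 (any M > max gives the same answer).\<close>
definition forb :: "nat list \<Rightarrow> nat list set \<Rightarrow> nat" where
  "forb s P = card {v. v \<le> Max (set s) \<and> \<not> avoids P (s @ [Suc (Max (set s)), v])}"

definition ifrak :: "nat \<Rightarrow> nat \<Rightarrow> nat \<Rightarrow> nat" where
  "ifrak n m f = card {s. inv_seq n s \<and> avoids {pat010, pat210} s \<and>
      Max (set s) = m \<and> forb s {pat010, pat210} = f}"

text \<open>Words over {1..b} \<union> {\<infinity>}, with \<infinity> encoded as the letter b+1 (largest letter).\<close>
definition hfrak :: "nat \<Rightarrow> nat \<Rightarrow> nat" where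
  "hfrak a b = card {w. length w = a \<and> set w \<subseteq> {1..Suc b} \<and> avoids {pat010} w \<and>
      (let u = filter (\<lambda>x. x \<noteq> Suc b) w in
         sorted u \<and> (if b = 0 then u = [] else u \<noteq> [] \<and> Max (set u) = b))}"

end

theory Submission
  imports Defs
begin

text \<open>
  Split a sequence at the first occurrence of its maximum \<open>m\<close>, as \<open>\<tau> m w\<close> with all entries of
  \<open>\<tau>\<close> below \<open>m\<close>. A letter appended to a sequence completes a 010 exactly when it repeats an
  earlier value that is followed by a larger one, and a 210 exactly when it lies below the smaller
  entry of a descent. Hence \<open>\<tau> m w\<close> avoids both patterns iff \<open>\<tau>\<close> does, \<open>w\<close> avoids 010, the letters
  of \<open>w\<close> other than \<open>m\<close> are nondecreasing and none of them is forbidden for \<open>\<tau>\<close>; and the forbidden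
  values of \<open>\<tau> m w\<close> are those of \<open>\<tau>\<close>, the value \<open>m\<close>, and everything below a letter of \<open>w\<close> other
  than \<open>m\<close>. So if \<open>\<tau>\<close> has \<open>i\<close> forbidden values, \<open>forb = f\<close> says precisely that the letters of \<open>w\<close>
  other than \<open>m\<close> are drawn from the \<open>f - i - 1\<close> smallest values not forbidden for \<open>\<tau>\<close>, the largest
  of which occurs. Relabelling these values as \<open>1, \<dots>, f - i - 1\<close> and \<open>m\<close> as \<open>\<infinity>\<close> identifies the
  possible tails \<open>w\<close> with the words counted by \<open>hfrak\<close>; summing over the position of \<open>m\<close>, the
  maximum of \<open>\<tau>\<close> and \<open>i\<close> gives the formula.
\<close>

section \<open>Patterns of length three\<close>

definition subseq_pairs :: "'a list \<Rightarrow> ('a \<times> 'a) set" where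
  "subseq_pairs w = {(w!i, w!j) | i j. i < j \<and> j < length w}"

lemma subseq_pairs_Nil [simp]: "subseq_pairs [] = {}"
  by (simp add: subseq_pairs_def)

lemma subseq_pairs_subset: "subseq_pairs w \<subseteq> set w \<times> set w"
  by (auto simp: subseq_pairs_def)

lemma subseq_pairs_snoc: "subseq_pairs (w @ [y]) = subseq_pairs w \<union> set w \<times> {y}"
proof (rule set_eqI, rule iffI)
  fix p assume "p \<in> subseq_pairs (w @ [y])"
  then obtain i j where "i < j" "j \<le> length w" "p = ((w @ [y])!i, (w @ [y])!j)"
    by (auto simp: subseq_pairs_def)
  then show "p \<in> subseq_pairs w \<union> set w \<times> {y}"
  proof (cases "j = length w")
    case False
    with \<open>i < j\<close> \<open>j \<le> length w\<close> \<open>p = _\<close> have "p = (w!i, w!j)" "j < length w"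
      by (auto simp: nth_append)
    with \<open>i < j\<close> show ?thesis unfolding subseq_pairs_def by blast
  qed (auto simp: nth_append)
next
  fix p assume "p \<in> subseq_pairs w \<union> set w \<times> {y}"
  then obtain i j where "i < j" "j < length (w @ [y])" "p = ((w @ [y])!i, (w @ [y])!j)"
    by (auto simp: subseq_pairs_def nth_append in_set_conv_nth)
  then show "p \<in> subseq_pairs (w @ [y])"
    unfolding subseq_pairs_def by blast
qed

lemma subseq_pairs_append:
  "subseq_pairs (u @ v) = subseq_pairs u \<union> subseq_pairs v \<union> set u \<times> set v"
  by (induction v rule: rev_induct) (auto simp: subseq_pairs_snoc simp flip: append_assoc)

lemma subseq_pairs_append_Cons:
  "subseq_pairs (u @ x # v) = subseq_pairs u \<union> subseq_pairs v \<union> {x} \<times> set v \<union> set u \<times> insert x (set v)"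
  using subseq_pairs_append[of u "[x] @ v"] subseq_pairs_append[of "[x]" v] subseq_pairs_snoc[of "[]" x]
  by auto

definition subseq_triples :: "'a list \<Rightarrow> ('a \<times> 'a \<times> 'a) set" where
  "subseq_triples w = {(w!i, w!j, w!l) | i j l. i < j \<and> j < l \<and> l < length w}"

lemma subseq_triples_snoc:
  "subseq_triples (w @ [y]) = subseq_triples w \<union> {(a, b, y) | a b. (a, b) \<in> subseq_pairs w}"
proof (rule set_eqI, rule iffI)
  fix t assume "t \<in> subseq_triples (w @ [y])"
  then obtain i j l where "i < j" "j < l" "l \<le> length w" "t = ((w @ [y])!i, (w @ [y])!j, (w @ [y])!l)"
    by (auto simp: subseq_triples_def)
  then show "t \<in> subseq_triples w \<union> {(a, b, y) | a b. (a, b) \<in> subseq_pairs w}"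
  proof (cases "l = length w")
    case False
    with \<open>i < j\<close> \<open>j < l\<close> \<open>l \<le> length w\<close> \<open>t = _\<close> have "t = (w!i, w!j, w!l)" "l < length w"
      by (auto simp: nth_append)
    with \<open>i < j\<close> \<open>j < l\<close> show ?thesis unfolding subseq_triples_def by blast
  qed (auto simp: subseq_pairs_def nth_append)
next
  fix t assume "t \<in> subseq_triples w \<union> {(a, b, y) | a b. (a, b) \<in> subseq_pairs w}"
  then obtain i j l where "i < j" "j < l" "l < length (w @ [y])" "t = ((w @ [y])!i, (w @ [y])!j, (w @ [y])!l)"
    by (auto simp: subseq_triples_def subseq_pairs_def nth_append)
  then show "t \<in> subseq_triples (w @ [y])"
    unfolding subseq_triples_def by blast
qed

lemma contains_length_3:
  "contains w [x, y, z] \<longleftrightarrow> (\<exists>(a, b, c) \<in> subseq_triples w. order_iso [a, b, c] [x, y, z])"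
proof
  assume "contains w [x, y, z]"
  then obtain i j l where "sorted_wrt (<) [i, j, l]" "l < length w" "order_iso (map ((!) w) [i, j, l]) [x, y, z]"
    unfolding contains_def by (auto simp: length_Suc_conv numeral_3_eq_3)
  then show "\<exists>(a, b, c) \<in> subseq_triples w. order_iso [a, b, c] [x, y, z]"
    unfolding subseq_triples_def by force
next
  assume "\<exists>(a, b, c) \<in> subseq_triples w. order_iso [a, b, c] [x, y, z]"
  then obtain i j l where "i < j" "j < l" "l < length w" "order_iso (map ((!) w) [i, j, l]) [x, y, z]"
    unfolding subseq_triples_def by auto
  then show "contains w [x, y, z]"
    unfolding contains_def by (intro exI[of _ "[i, j, l]"]) auto
qed

lemma order_iso_010: "order_iso [a, b, c] [0, 1, 0] \<longleftrightarrow> a = c \<and> a < b"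
  by (auto simp: order_iso_def less_Suc_eq numeral_3_eq_3 all_conj_distrib)

lemma order_iso_210: "order_iso [a, b, c] [2, 1, 0] \<longleftrightarrow> c < b \<and> b < a"
  by (auto simp: order_iso_def less_Suc_eq numeral_3_eq_3 all_conj_distrib)

lemma contains_010_iff: "contains w pat010 \<longleftrightarrow> (\<exists>(a, b, c) \<in> subseq_triples w. a = c \<and> a < b)"
  unfolding pat010_def contains_length_3 order_iso_010 ..

lemma contains_210_iff: "contains w pat210 \<longleftrightarrow> (\<exists>(a, b, c) \<in> subseq_triples w. c < b \<and> b < a)"
  unfolding pat210_def contains_length_3 order_iso_210 ..

section \<open>Extending a sequence to the right\<close>

definition blocked_010 :: "'a::order list \<Rightarrow> 'a set" where
  "blocked_010 w = {a. \<exists>b. (a, b) \<in> subseq_pairs w \<and> a < b}"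

definition blocked_210 :: "'a::order list \<Rightarrow> 'a set" where
  "blocked_210 w = {y. \<exists>a b. (a, b) \<in> subseq_pairs w \<and> y < b \<and> b < a}"

lemma avoids_010_Nil: "avoids {pat010} []"
  by (simp add: avoids_def contains_010_iff subseq_triples_def)

lemma avoids_010_snoc: "avoids {pat010} (w @ [y]) \<longleftrightarrow> avoids {pat010} w \<and> y \<notin> blocked_010 w"
  by (auto simp: avoids_def contains_010_iff subseq_triples_snoc blocked_010_def)

lemma avoids_010_210_snoc:
  "avoids {pat010, pat210} (w @ [y]) \<longleftrightarrow>
     avoids {pat010, pat210} w \<and> y \<notin> blocked_010 w \<and> y \<notin> blocked_210 w"
  by (auto simp: avoids_def contains_010_iff contains_210_iff subseq_triples_snoc
      blocked_010_def blocked_210_def)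

lemma blocked_010_subset: "blocked_010 w \<subseteq> set w"
  using subseq_pairs_subset by (fastforce simp: blocked_010_def)

lemma blocked_210_less_Max: "y \<in> blocked_210 w \<Longrightarrow> y < Max (set w)"
  using subseq_pairs_subset by (fastforce simp: blocked_210_def intro: less_le_trans)

lemma blocked_010_snoc: "blocked_010 (w @ [y]) = blocked_010 w \<union> {a \<in> set w. a < y}"
  by (auto simp: blocked_010_def subseq_pairs_snoc)

lemma blocked_210_snoc: "blocked_210 (w @ [y]) = blocked_210 w \<union> {x. \<exists>a \<in> set w. x < y \<and> y < a}"
  by (auto simp: blocked_210_def subseq_pairs_snoc)

definition forb_set :: "nat list \<Rightarrow> nat set" where
  "forb_set s = set s \<union> blocked_210 s"

lemma forb_set_le_Max: "x \<in> forb_set s \<Longrightarrow> x \<le> Max (set s)"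
  by (auto simp: forb_set_def dest: blocked_210_less_Max)

lemma finite_forb_set: "finite (forb_set s)"
  by (rule finite_subset[of _ "{..Max (set s)}"]) (auto dest: forb_set_le_Max)

lemma forb_set_less: "set u \<subseteq> {..<m} \<Longrightarrow> forb_set u \<subseteq> {..<m}"
  using subseq_pairs_subset[of u] by (fastforce simp: forb_set_def blocked_210_def)

lemma forb_eq_card_forb_set:
  assumes "avoids {pat010, pat210} s"
  shows "forb s {pat010, pat210} = card (forb_set s)"
proof -
  define M where "M = Suc (Max (set s))"
  have less_M: "x < M" if "x \<in> forb_set s" for x
    using forb_set_le_Max[OF that] by (simp add: M_def)
  have "blocked_010 (s @ [M]) = set s"
    using blocked_010_subset[of s] less_M by (auto simp: blocked_010_snoc forb_set_def)
  moreover have "blocked_210 (s @ [M]) = blocked_210 s"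
    using less_M by (fastforce simp: blocked_210_snoc forb_set_def)
  moreover have "avoids {pat010, pat210} (s @ [M])"
    using assms blocked_010_subset[of s] less_M[of M]
    by (auto simp: avoids_010_210_snoc forb_set_def)
  ultimately have "\<not> avoids {pat010, pat210} (s @ [M, v]) \<longleftrightarrow> v \<in> forb_set s" for v
    using avoids_010_210_snoc[of "s @ [M]" v] by (simp add: forb_set_def)
  then have "{v. v \<le> Max (set s) \<and> \<not> avoids {pat010, pat210} (s @ [M, v])} = forb_set s"
    using forb_set_le_Max by blast
  then show ?thesis
    by (simp add: forb_def M_def)
qed

section \<open>Splitting at the first occurrence of the maximum\<close>

lemma blocked_010_append_max:
  assumes "set u \<subseteq> {..<m}" "set v \<subseteq> {..m}"
  shows "blocked_010 (u @ m # v) = set u \<union> blocked_010 v"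
  using assms subseq_pairs_subset[of u] subseq_pairs_subset[of v]
  by (fastforce simp: blocked_010_def subseq_pairs_append_Cons)

lemma blocked_210_append_max:
  assumes "set u \<subseteq> {..<m}" "set v \<subseteq> {..m}"
  shows "blocked_210 (u @ m # v) = blocked_210 u \<union> {y. \<exists>b \<in> set v. y < b \<and> b < m}"
  using assms subseq_pairs_subset[of u] subseq_pairs_subset[of v]
  by (fastforce simp: blocked_210_def subseq_pairs_append_Cons)

lemma avoids_010_210_append_max:
  assumes u: "set u \<subseteq> {..<m}" and v: "set v \<subseteq> {..m}"
  shows "avoids {pat010, pat210} (u @ m # v) \<longleftrightarrow>
    avoids {pat010, pat210} u \<and> (\<forall>x \<in> set v. x = m \<or> x \<notin> forb_set u) \<and>
    sorted (filter (\<lambda>x. x \<noteq> m) v) \<and> avoids {pat010} v"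
  using v
proof (induction v rule: rev_induct)
  case Nil
  have "m \<notin> blocked_010 u" "m \<notin> blocked_210 u"
    using forb_set_less[OF u] blocked_010_subset[of u] by (auto simp: forb_set_def)
  then show ?case
    using avoids_010_210_snoc[of u m] avoids_010_Nil by simp
next
  case (snoc y v)
  then have v: "set v \<subseteq> {..m}"
    by auto
  have "m \<notin> forb_set u"
    using forb_set_less[OF u] by auto
  moreover have "\<forall>x \<in> set v. x \<le> m"
    using v by auto
  ultimately show ?case
    unfolding append_Cons[symmetric] append_assoc[symmetric] avoids_010_210_snoc snoc.IH[OF v]
      blocked_010_append_max[OF u v] blocked_210_append_max[OF u v] avoids_010_snoc
    by (auto simp: sorted_append forb_set_def not_less dest: le_antisym)
qed

lemma forb_set_append_max:
  assumes "set u \<subseteq> {..<m}" "set v \<subseteq> {..m}"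
  shows "forb_set (u @ m # v) = forb_set u \<union> insert m {x. \<exists>b \<in> set v. b < m \<and> x \<le> b}"
  using assms by (auto simp: forb_set_def blocked_210_append_max subset_iff le_less)

lemma forb_append_max:
  assumes u: "set u \<subseteq> {..<m}" and w: "set w \<subseteq> {..m}"
    and avoids: "avoids {pat010, pat210} (u @ m # w)"
  shows "forb (u @ m # w) {pat010, pat210} =
    Suc (card (forb_set u)) + card (({..<m} - forb_set u) \<inter> {x. \<exists>v \<in> set w - {m}. x \<le> v})"
proof -
  let ?D = "({..<m} - forb_set u) \<inter> {x. \<exists>v \<in> set w - {m}. x \<le> v}"
  have "set w - {m} \<subseteq> {..<m} - forb_set u"
    using avoids w unfolding avoids_010_210_append_max[OF u w] by auto
  then have "forb_set (u @ m # w) = insert m (forb_set u) \<union> ?D"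
    using w unfolding forb_set_append_max[OF u w] by (auto simp: less_le subset_iff)
  moreover have "m \<notin> forb_set u" "insert m (forb_set u) \<inter> ?D = {}"
    using forb_set_less[OF u] by auto
  ultimately show ?thesis
    by (simp add: forb_eq_card_forb_set[OF avoids] card_Un_disjoint finite_forb_set)
qed

lemma Max_append_max_iff:
  assumes "set u \<subseteq> {..<m}"
  shows "Max (set (u @ m # w)) = m \<longleftrightarrow> set w \<subseteq> {..m}"
proof
  assume Max: "Max (set (u @ m # w)) = m"
  show "set w \<subseteq> {..m}"
  proof
    fix x assume "x \<in> set w"
    then have "x \<le> Max (set (u @ m # w))"
      by (intro Max_ge) auto
    with Max show "x \<in> {..m}"
      by simp
  qed
qed (use assms in \<open>auto simp: subset_iff intro!: Max_eqI\<close>)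

lemma strict_sorted_nth_le_iff:
  fixes cs :: "'a::linorder list"
  assumes "sorted_wrt (<) cs" "i < length cs" "j < length cs"
  shows "cs!i \<le> cs!j \<longleftrightarrow> i \<le> j"
  using assms by (metis leD leI le_less sorted_wrt_nth_less)

lemma set_take_down_closed:
  fixes cs :: "'a::linorder list"
  assumes "sorted_wrt (<) cs" "x \<in> set cs" "y \<in> set (take b cs)" "x \<le> y"
  shows "x \<in> set (take b cs)"
proof -
  obtain i j where "i < length cs" "x = cs!i" "j < min b (length cs)" "y = cs!j"
    using assms(2,3) by (auto simp: in_set_conv_nth)
  with assms(1,4) have "i < min b (length cs)"
    using strict_sorted_nth_le_iff by fastforce
  with \<open>x = cs!i\<close> show ?thesis
    by (auto simp: in_set_conv_nth)
qed

lemma down_closed_eq_set_take: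
  fixes cs :: "'a::linorder list"
  assumes sorted: "sorted_wrt (<) cs" and "D \<subseteq> set cs"
    and down: "\<And>x y. x \<in> set cs \<Longrightarrow> y \<in> D \<Longrightarrow> x \<le> y \<Longrightarrow> x \<in> D"
  shows "D = set (take (card D) cs)"
proof -
  let ?t = "takeWhile (\<lambda>x. x \<in> D) cs"
  have "D \<subseteq> set ?t"
  proof
    fix y assume "y \<in> D"
    show "y \<in> set ?t"
    proof (rule ccontr)
      assume "y \<notin> set ?t"
      with \<open>y \<in> D\<close> \<open>D \<subseteq> set cs\<close> have "y \<in> set (dropWhile (\<lambda>x. x \<in> D) cs)"
        using takeWhile_dropWhile_id[of "\<lambda>x. x \<in> D" cs] by (metis Un_iff set_append subsetD)
      then obtain z zs where drop: "dropWhile (\<lambda>x. x \<in> D) cs = z # zs" and "y \<in> set (z # zs)"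
        by (cases "dropWhile (\<lambda>x. x \<in> D) cs") auto
      have "sorted_wrt (<) (z # zs)"
        using sorted sorted_wrt_append takeWhile_dropWhile_id[of "\<lambda>x. x \<in> D" cs] drop by metis
      with \<open>y \<in> set (z # zs)\<close> have "z \<le> y"
        by auto
      moreover have "z \<in> set cs"
        using drop by (metis list.set_intros(1) set_dropWhileD)
      moreover have "z \<notin> D"
        using drop dropWhile_eq_Cons_conv by metis
      ultimately show False
        using down \<open>y \<in> D\<close> by blast
    qed
  qed
  then have "D = set ?t"
    by (auto dest: set_takeWhileD)
  moreover have "card (set ?t) = length ?t"
    using sorted by (intro distinct_card) (auto intro: distinct_takeWhile strict_sorted_iff[THEN iffD1, THEN conjunct2])
  ultimately show ?thesis
    by (metis takeWhile_eq_take)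
qed

lemma card_down_closure_eq_iff:
  fixes cs :: "'a::linorder list"
  assumes sorted: "sorted_wrt (<) cs" and V: "V \<subseteq> set cs" and b: "b \<le> length cs"
  defines "A \<equiv> set (take b cs)"
  shows "card (set cs \<inter> {x. \<exists>v \<in> V. x \<le> v}) = b \<longleftrightarrow> V \<subseteq> A \<and> (A \<noteq> {} \<longrightarrow> Max A \<in> V)"
    (is "card ?D = b \<longleftrightarrow> _")
proof -
  have "card A = b"
    using sorted b unfolding A_def
    by (subst distinct_card) (auto simp: strict_sorted_iff intro: distinct_take)
  moreover have "?D = set (take (card ?D) cs)"
    by (rule down_closed_eq_set_take[OF sorted]) (auto intro: order_trans)
  ultimately have "card ?D = b \<longleftrightarrow> ?D = A"
    unfolding A_def by metis
  moreover have "?D = A \<longleftrightarrow> V \<subseteq> A \<and> (A \<noteq> {} \<longrightarrow> Max A \<in> V)"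
  proof
    assume D: "?D = A"
    have "Max A \<in> V" if "A \<noteq> {}"
    proof -
      have "Max A \<in> ?D"
        using D Max_in[OF _ that] by (simp add: A_def)
      then obtain v where "v \<in> V" "Max A \<le> v"
        by blast
      moreover have "v \<in> A"
        using \<open>v \<in> V\<close> V D by blast
      then have "v \<le> Max A"
        by (simp add: A_def)
      ultimately show ?thesis
        by simp
    qed
    with D V show "V \<subseteq> A \<and> (A \<noteq> {} \<longrightarrow> Max A \<in> V)"
      by auto
  next
    assume RHS: "V \<subseteq> A \<and> (A \<noteq> {} \<longrightarrow> Max A \<in> V)"
    show "?D = A"
    proof
      show "?D \<subseteq> A"
        using RHS set_take_down_closed[OF sorted] unfolding A_def by blast
      show "A \<subseteq> ?D"
      proof
        fix a assume "a \<in> A"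
        moreover have "finite A" "A \<subseteq> set cs"
          unfolding A_def by (simp_all add: set_take_subset)
        ultimately have "a \<le> Max A" "A \<noteq> {}" "a \<in> set cs"
          by auto
        with RHS show "a \<in> ?D"
          by blast
      qed
    qed
  qed
  ultimately show ?thesis
    by simp
qed

lemma strict_mono_on_nth_pred:
  fixes L :: "'a::linorder list"
  assumes "sorted_wrt (<) L"
  shows "strict_mono_on {1..length L} (\<lambda>k. L!(k - 1))"
  using assms by (intro strict_mono_onI) (auto intro: sorted_wrt_nth_less)

lemma image_nth_pred_atLeastAtMost:
  assumes "n \<le> length L"
  shows "(\<lambda>k. L!(k - 1)) ` {1..n} = set (take n L)"
proof -
  have "(\<lambda>k. L!(k - 1)) ` Suc ` {0..<n} = set (take n L)"
    unfolding image_image diff_Suc_1 by (rule nth_image[OF assms])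
  moreover have "Suc ` {0..<n} = {1..n}"
    by (simp add: atLeastLessThanSuc_atLeastAtMost)
  ultimately show ?thesis
    by simp
qed

lemma takeWhile_append_Cons_neq:
  "x \<notin> set u \<Longrightarrow> takeWhile (\<lambda>y. y \<noteq> x) (u @ x # w) = u"
  by (subst takeWhile_append2) auto

lemma takeWhile_neq_append_Cons:
  assumes "x \<in> set s"
  shows "s = takeWhile (\<lambda>y. y \<noteq> x) s @ x # tl (dropWhile (\<lambda>y. y \<noteq> x) s)"
proof -
  have "dropWhile (\<lambda>y. y \<noteq> x) s \<noteq> []"
    using assms by (simp add: dropWhile_eq_Nil_conv)
  then show ?thesis
    by (metis (mono_tags) hd_dropWhile list.collapse takeWhile_dropWhile_id)
qed

lemma card_eq_sum_split_first:
  assumes "finite S" "finite T" and T: "\<And>u. u \<in> T \<Longrightarrow> x \<notin> set u"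
    and S: "\<And>s. s \<in> S \<Longrightarrow> x \<in> set s \<and> takeWhile (\<lambda>y. y \<noteq> x) s \<in> T"
  shows "card S = (\<Sum>u \<in> T. card {w. u @ x # w \<in> S})"
proof -
  have "S = (\<Union>u \<in> T. (\<lambda>w. u @ x # w) ` {w. u @ x # w \<in> S})"
  proof (intro equalityI subsetI)
    fix s assume "s \<in> S"
    let ?u = "takeWhile (\<lambda>y. y \<noteq> x) s"
    have "s = ?u @ x # tl (dropWhile (\<lambda>y. y \<noteq> x) s)"
      using S[OF \<open>s \<in> S\<close>] by (intro takeWhile_neq_append_Cons) blast
    moreover have "?u \<in> T"
      using S[OF \<open>s \<in> S\<close>] ..
    ultimately show "s \<in> (\<Union>u \<in> T. (\<lambda>w. u @ x # w) ` {w. u @ x # w \<in> S})"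
      using \<open>s \<in> S\<close> by (intro UN_I[of ?u]) (auto intro: image_eqI)
  qed auto
  also have "card \<dots> = (\<Sum>u \<in> T. card ((\<lambda>w. u @ x # w) ` {w. u @ x # w \<in> S}))"
  proof (rule card_UN_disjoint[OF \<open>finite T\<close>])
    show "\<forall>u \<in> T. finite ((\<lambda>w. u @ x # w) ` {w. u @ x # w \<in> S})"
      using \<open>finite S\<close> by (auto intro: finite_subset)
    show "\<forall>u \<in> T. \<forall>v \<in> T. u \<noteq> v \<longrightarrow>
        (\<lambda>w. u @ x # w) ` {w. u @ x # w \<in> S} \<inter> (\<lambda>w. v @ x # w) ` {w. v @ x # w \<in> S} = {}"
    proof (intro ballI impI)
      fix u v assume "u \<in> T" "v \<in> T" "u \<noteq> v"
      have "u @ x # w \<noteq> v @ x # w'" for w w'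
        using takeWhile_append_Cons_neq[OF T[OF \<open>u \<in> T\<close>], of w]
          takeWhile_append_Cons_neq[OF T[OF \<open>v \<in> T\<close>], of w'] \<open>u \<noteq> v\<close> by metis
      then show "(\<lambda>w. u @ x # w) ` {w. u @ x # w \<in> S} \<inter> (\<lambda>w. v @ x # w) ` {w. v @ x # w \<in> S} = {}"
        by blast
    qed
  qed
  also have "\<dots> = (\<Sum>u \<in> T. card {w. u @ x # w \<in> S})"
    by (intro sum.cong refl card_image) (simp add: inj_on_def)
  finally show ?thesis .
qed

section \<open>Order-isomorphic alphabets\<close>

lemma order_iso_map_strict_mono:
  assumes "strict_mono_on (set u) g"
  shows "order_iso (map g u) p \<longleftrightarrow> order_iso u p"
  using assms by (auto simp: order_iso_def strict_mono_on_less strict_mono_on_eq)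

lemma contains_map_strict_mono:
  assumes g: "strict_mono_on (set w) g"
  shows "contains (map g w) p \<longleftrightarrow> contains w p"
proof -
  have "order_iso (map ((!) (map g w)) idx) p \<longleftrightarrow> order_iso (map ((!) w) idx) p"
    if "\<forall>k \<in> set idx. k < length w" for idx
  proof -
    have "map ((!) (map g w)) idx = map g (map ((!) w) idx)"
      using that by simp
    moreover have "strict_mono_on (set (map ((!) w) idx)) g"
      using that by (auto intro: monotone_on_subset[OF g])
    ultimately show ?thesis
      by (metis order_iso_map_strict_mono)
  qed
  then show ?thesis
    unfolding contains_def by auto
qed

lemma Max_image_mono_on:
  assumes "mono_on A g" "finite A" "A \<noteq> {}"
  shows "Max (g ` A) = g (Max A)"
proof (rule Max_eqI)
  show "y \<le> g (Max A)" if "y \<in> g ` A" for y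
    using that assms by (auto intro!: mono_onD[OF assms(1)] Max_in)
qed (use assms in auto)

lemma strict_mono_on_the_inv_into:
  fixes g :: "'a::linorder \<Rightarrow> 'b::linorder"
  assumes "strict_mono_on S g"
  shows "strict_mono_on (g ` S) (the_inv_into S g)"
proof (rule strict_mono_onI)
  fix x y assume "x \<in> g ` S" "y \<in> g ` S" "x < y"
  then obtain x' y' where "x' \<in> S" "y' \<in> S" "x = g x'" "y = g y'"
    by blast
  with assms \<open>x < y\<close> show "the_inv_into S g x < the_inv_into S g y"
    by (simp add: the_inv_into_f_f strict_mono_on_imp_inj_on strict_mono_on_less)
qed

text \<open>The words counted by \<open>hfrak\<close>, over an arbitrary alphabet: \<open>A\<close> plays the role of
  \<open>{1..b}\<close> and the letter \<open>t\<close> that of \<open>\<infinity>\<close>.\<close>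

definition h_words :: "nat set \<Rightarrow> nat \<Rightarrow> nat \<Rightarrow> nat list set" where
  "h_words A t a = {w. length w = a \<and> set w \<subseteq> insert t A \<and> avoids {pat010} w \<and>
     sorted (filter (\<lambda>x. x \<noteq> t) w) \<and> (A \<noteq> {} \<longrightarrow> Max A \<in> set w)}"

lemma finite_h_words: "finite A \<Longrightarrow> finite (h_words A t a)"
  by (rule finite_subset[OF _ finite_lists_length_eq[of "insert t A" a]]) (auto simp: h_words_def)

lemma hfrak_eq_card_h_words: "hfrak a b = card (h_words {1..b} (Suc b) a)"
proof -
  have "(let u = filter (\<lambda>x. x \<noteq> Suc b) w in
          sorted u \<and> (if b = 0 then u = [] else u \<noteq> [] \<and> Max (set u) = b)) \<longleftrightarrow>
        sorted (filter (\<lambda>x. x \<noteq> Suc b) w) \<and> ({1..b} \<noteq> {} \<longrightarrow> Max {1..b} \<in> set w)"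
    if "set w \<subseteq> {1..Suc b}" for w
  proof -
    have u: "set (filter (\<lambda>x. x \<noteq> Suc b) w) = set w - {Suc b}"
      by auto
    show ?thesis
    proof (cases "b = 0")
      case True
      with that show ?thesis
        by (auto simp: filter_empty_conv)
    next
      case False
      let ?S = "set w - {Suc b}"
      have "?S \<noteq> {} \<and> Max ?S = b \<longleftrightarrow> b \<in> set w"
      proof
        assume "?S \<noteq> {} \<and> Max ?S = b"
        then show "b \<in> set w"
          using Max_in[of ?S] by auto
      next
        assume "b \<in> set w"
        moreover have "?S \<subseteq> {..b}"
          using that by auto
        ultimately show "?S \<noteq> {} \<and> Max ?S = b"
          by (auto intro: Max_eqI)
      qed
      moreover have "Max {1..b} = b"
        using False by (intro Max_eqI) auto
      ultimately show ?thesis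
        using False u by (simp add: Let_def flip: set_empty)
    qed
  qed
  moreover have "insert (Suc b) {1..b} = {1..Suc b}"
    by auto
  ultimately show ?thesis
    unfolding hfrak_def h_words_def by (intro arg_cong[where f = card] Collect_cong) blast
qed

lemma map_mem_h_words:
  assumes A: "finite A" and g: "strict_mono_on (insert t A) g" and w: "w \<in> h_words A t a"
  shows "map g w \<in> h_words (g ` A) (g t) a"
proof -
  have set_w: "set w \<subseteq> insert t A"
    using w by (simp add: h_words_def)
  then have g_w: "strict_mono_on (set w) g"
    by (rule monotone_on_subset[OF g])
  have "filter (\<lambda>x. g x \<noteq> g t) w = filter (\<lambda>x. x \<noteq> t) w"
    using set_w by (intro filter_cong) (auto simp: strict_mono_on_eq[OF g])
  then have filter_eq: "filter (\<lambda>x. x \<noteq> g t) (map g w) = map g (filter (\<lambda>x. x \<noteq> t) w)"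
    by (simp add: filter_map o_def)
  have "sorted (map g (filter (\<lambda>x. x \<noteq> t) w))"
  proof (rule sorted_map_mono)
    show "sorted (filter (\<lambda>x. x \<noteq> t) w)"
      using w by (simp add: h_words_def)
    show "mono_on (set (filter (\<lambda>x. x \<noteq> t) w)) g"
      using strict_mono_on_imp_mono_on[OF g_w] by (rule monotone_on_subset) auto
  qed
  moreover have "g (Max A) \<in> set (map g w)" if "A \<noteq> {}"
    using w that by (simp add: h_words_def)
  moreover have "Max (g ` A) = g (Max A)" if "A \<noteq> {}"
    using Max_image_mono_on[OF _ A that] strict_mono_on_imp_mono_on[OF g]
    by (meson monotone_on_subset subset_insertI)
  moreover have "avoids {pat010} (map g w)"
    using w contains_map_strict_mono[OF g_w] by (simp add: h_words_def avoids_def)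
  moreover have "length (map g w) = a" "set (map g w) \<subseteq> insert (g t) (g ` A)"
    using w by (auto simp: h_words_def)
  ultimately show ?thesis
    unfolding h_words_def by (auto simp: filter_eq)
qed

lemma card_h_words_le_image:
  assumes A: "finite A" and g: "strict_mono_on (insert t A) g"
  shows "card (h_words A t a) \<le> card (h_words (g ` A) (g t) a)"
proof (rule card_inj_on_le)
  show "inj_on (map g) (h_words A t a)"
  proof (rule inj_onI)
    fix u v assume "u \<in> h_words A t a" "v \<in> h_words A t a" "map g u = map g v"
    moreover have "inj_on g (set u \<union> set v)"
      using calculation(1,2) strict_mono_on_imp_inj_on[OF g]
      by (auto simp: h_words_def intro: inj_on_subset)
    ultimately show "u = v"
      by (blast intro: map_inj_on)
  qed
  show "map g ` h_words A t a \<subseteq> h_words (g ` A) (g t) a"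
    using map_mem_h_words[OF A g] by blast
  show "finite (h_words (g ` A) (g t) a)"
    using A by (simp add: finite_h_words)
qed

lemma card_h_words_image:
  assumes A: "finite A" and g: "strict_mono_on (insert t A) g"
  shows "card (h_words (g ` A) (g t) a) = card (h_words A t a)"
proof (rule antisym)
  let ?h = "the_inv_into (insert t A) g"
  have h: "strict_mono_on (insert (g t) (g ` A)) ?h"
    using strict_mono_on_the_inv_into[OF g] by simp
  have "?h ` g ` A = A" "?h (g t) = t"
    using the_inv_into_f_f[OF strict_mono_on_imp_inj_on[OF g]] by (force simp: image_image)+
  then show "card (h_words (g ` A) (g t) a) \<le> card (h_words A t a)"
    using card_h_words_le_image[OF _ h] A by simp
qed (rule card_h_words_le_image[OF A g])

lemma card_h_words_set_take:
  assumes sorted: "sorted_wrt (<) cs" and b: "b \<le> length cs" and cs: "set cs \<subseteq> {..<m}"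
  shows "card (h_words (set (take b cs)) m a) = hfrak a b"
proof -
  define L where "L = take b cs @ [m]"
  have "sorted_wrt (<) L"
    using sorted cs set_take_subset[of b cs]
    by (auto simp: L_def sorted_wrt_append intro: sorted_wrt_take)
  then have "strict_mono_on (insert (Suc b) {1..b}) (\<lambda>k. L!(k - 1))"
    using strict_mono_on_nth_pred[of L] b by (simp add: L_def atLeastAtMostSuc_conv)
  moreover have "(\<lambda>k. L!(k - 1)) ` {1..b} = set (take b cs)"
    using image_nth_pred_atLeastAtMost[of b L] b by (simp add: L_def)
  moreover have "L!(Suc b - 1) = m"
    using b by (simp add: L_def nth_append)
  ultimately show ?thesis
    using card_h_words_image[of "{1..b}" "Suc b" "\<lambda>k. L!(k - 1)" a]
    by (simp add: hfrak_eq_card_h_words)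
qed

section \<open>Counting by the first occurrence of the maximum\<close>

lemma inv_seq_append:
  "inv_seq (length u + length v) (u @ v) \<longleftrightarrow> inv_seq (length u) u \<and> (\<forall>k < length v. v!k \<le> length u + k)"
proof -
  have "(\<forall>k < length u + length v. (u @ v)!k < Suc k) \<longleftrightarrow>
      (\<forall>k < length u. u!k < Suc k) \<and> (\<forall>k < length v. v!k < Suc (length u + k))"
  proof (intro iffI conjI allI impI)
    fix k assume "\<forall>k < length u + length v. (u @ v)!k < Suc k"
    then show "u!k < Suc k" if "k < length u" for k
      using that by (metis nth_append_left trans_less_add1)
    show "v!k < Suc (length u + k)" if "k < length v" for k
      using that \<open>\<forall>k < _. _\<close>[rule_format, of "length u + k"] by simp
  next
    fix k assume "(\<forall>k < length u. u!k < Suc k) \<and> (\<forall>k < length v. v!k < Suc (length u + k))"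
      "k < length u + length v"
    then show "(u @ v)!k < Suc k"
    proof (cases "k < length u")
      case False
      with \<open>(\<forall>k < length u. _) \<and> (\<forall>k < length v. _)\<close> \<open>k < length u + length v\<close> show ?thesis
        by (auto simp: nth_append dest!: spec[of _ "k - length u"])
    qed (auto simp: nth_append)
  qed
  then show ?thesis
    by (simp add: inv_seq_def less_Suc_eq_le)
qed

lemma inv_seq_append_max:
  assumes "inv_seq (length u) u" "m \<le> length u" "set w \<subseteq> {..m}"
  shows "inv_seq n (u @ m # w) \<longleftrightarrow> n = Suc (length u + length w)"
proof -
  have "(m # w)!k \<le> length u + k" if "k < length (m # w)" for k
    using assms(2,3) nth_mem[OF that] by (auto simp del: nth_mem)
  then show ?thesis
    using inv_seq_append[of u "m # w"] assms(1) by (auto simp: inv_seq_def)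
qed

definition ifrak_seqs :: "nat \<Rightarrow> nat \<Rightarrow> nat \<Rightarrow> nat list set" where
  "ifrak_seqs n m f = {s. inv_seq n s \<and> avoids {pat010, pat210} s \<and> Max (set s) = m \<and>
     forb s {pat010, pat210} = f}"

lemma ifrak_eq_card_ifrak_seqs: "ifrak n m f = card (ifrak_seqs n m f)"
  by (simp add: ifrak_def ifrak_seqs_def)

lemma finite_ifrak_seqs: "finite (ifrak_seqs n m f)"
proof (rule finite_subset[OF _ finite_lists_length_eq[of "{..<n}" n]])
  show "ifrak_seqs n m f \<subseteq> {s. set s \<subseteq> {..<n} \<and> length s = n}"
    by (fastforce simp: ifrak_seqs_def inv_seq_def in_set_conv_nth)
qed simp

lemma ifrak_seqs_params_unique:
  "s \<in> ifrak_seqs n m f \<Longrightarrow> s \<in> ifrak_seqs n' m' f' \<Longrightarrow> n = n' \<and> m = m' \<and> f = f'"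
  by (auto simp: ifrak_seqs_def inv_seq_def)

lemma ifrak_seqs_below:
  assumes "\<tau> \<in> ifrak_seqs n j i" "n \<noteq> 0" "j < m"
  shows "set \<tau> \<subseteq> {..<m}" "card ({..<m} - forb_set \<tau>) = m - i"
proof -
  have "\<tau> \<noteq> []" "Max (set \<tau>) = j"
    and avoids: "avoids {pat010, pat210} \<tau>" and "forb \<tau> {pat010, pat210} = i"
    using assms(1,2) by (auto simp: ifrak_seqs_def inv_seq_def)
  with \<open>j < m\<close> show less: "set \<tau> \<subseteq> {..<m}"
    by auto
  show "card ({..<m} - forb_set \<tau>) = m - i"
    using forb_set_less[OF less] \<open>forb \<tau> _ = i\<close> forb_eq_card_forb_set[OF avoids]
    by (simp add: card_Diff_subset finite_forb_set)
qed

lemma append_max_mem_ifrak_seqs_iff: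
  assumes \<tau>: "\<tau> \<in> ifrak_seqs (p - 1) j i" and "j < m" "m < p" "p \<le> n" "i < f" "f \<le> Suc m"
  defines "A \<equiv> set (take (f - i - 1) (sorted_list_of_set ({..<m} - forb_set \<tau>)))"
  shows "\<tau> @ m # w \<in> ifrak_seqs n m f \<longleftrightarrow> w \<in> h_words A m (n - p)"
proof -
  let ?C = "{..<m} - forb_set \<tau>"
  let ?cs = "sorted_list_of_set ?C"
  let ?V = "set w - {m}"
  have inv: "inv_seq (length \<tau>) \<tau>" and len: "length \<tau> = p - 1"
    and avoids: "avoids {pat010, pat210} \<tau>" and forb: "forb \<tau> {pat010, pat210} = i"
    using \<tau> by (auto simp: ifrak_seqs_def inv_seq_def)
  have less: "set \<tau> \<subseteq> {..<m}" and card_C: "card ?C = m - i"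
    using ifrak_seqs_below[OF \<tau> _ \<open>j < m\<close>] assms(2,3) by auto
  have "set ?cs = ?C"
    by simp
  then have A_C: "A \<subseteq> ?C"
    unfolding A_def by (metis set_take_subset)
  have "Max A \<noteq> m" if "A \<noteq> {}"
    using A_C Max_in[OF _ that] by (auto simp: A_def)
  then have down: "card (?C \<inter> {x. \<exists>v \<in> ?V. x \<le> v}) = f - i - 1 \<longleftrightarrow>
      set w \<subseteq> insert m A \<and> (A \<noteq> {} \<longrightarrow> Max A \<in> set w)" if "?V \<subseteq> ?C"
    using card_down_closure_eq_iff[of ?cs ?V "f - i - 1"] that card_C assms(5,6)
    by (auto simp: A_def)
  show ?thesis
  proof
    assume "\<tau> @ m # w \<in> ifrak_seqs n m f"
    then have inv': "inv_seq n (\<tau> @ m # w)" and avoids': "avoids {pat010, pat210} (\<tau> @ m # w)"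
      and Max': "Max (set (\<tau> @ m # w)) = m" and forb': "forb (\<tau> @ m # w) {pat010, pat210} = f"
      by (auto simp: ifrak_seqs_def)
    have w: "set w \<subseteq> {..m}"
      using Max' Max_append_max_iff[OF less] by simp
    have "\<forall>x \<in> set w. x = m \<or> x \<notin> forb_set \<tau>"
      "sorted (filter (\<lambda>x. x \<noteq> m) w)" "avoids {pat010} w"
      using avoids' avoids_010_210_append_max[OF less w] by auto
    moreover from this(1) w have "?V \<subseteq> ?C"
      by auto
    moreover have "length w = n - p"
      using inv' inv_seq_append_max[OF inv _ w] len assms(3) by simp
    ultimately show "w \<in> h_words A m (n - p)"
      using forb' forb_append_max[OF less w avoids'] down forb forb_eq_card_forb_set[OF avoids]
      by (auto simp: h_words_def)
  next
    assume "w \<in> h_words A m (n - p)"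
    then have w_A: "set w \<subseteq> insert m A" and "length w = n - p"
      and "sorted (filter (\<lambda>x. x \<noteq> m) w)" "avoids {pat010} w" "A \<noteq> {} \<longrightarrow> Max A \<in> set w"
      by (auto simp: h_words_def)
    moreover have w: "set w \<subseteq> {..m}"
      using w_A A_C by auto
    moreover have "?V \<subseteq> ?C"
      using w_A A_C by auto
    moreover have avoids': "avoids {pat010, pat210} (\<tau> @ m # w)"
      using avoids_010_210_append_max[OF less w] avoids calculation by auto
    ultimately show "\<tau> @ m # w \<in> ifrak_seqs n m f"
      using forb_append_max[OF less w avoids'] down forb forb_eq_card_forb_set[OF avoids]
        inv_seq_append_max[OF inv _ w] Max_append_max_iff[OF less] len assms(3-5)
      by (auto simp: ifrak_seqs_def)
  qed
qed

lemma card_tails_eq_hfrak: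
  assumes \<tau>: "\<tau> \<in> ifrak_seqs (p - 1) j i" and "j < m" "m < p" "p \<le> n" "i < f" "f \<le> Suc m"
  shows "card {w. \<tau> @ m # w \<in> ifrak_seqs n m f} = hfrak (n - p) (f - i - 1)"
proof -
  let ?cs = "sorted_list_of_set ({..<m} - forb_set \<tau>)"
  have "card ({..<m} - forb_set \<tau>) = m - i"
    using ifrak_seqs_below[OF \<tau> _ \<open>j < m\<close>] assms(2,3) by auto
  then have "f - i - 1 \<le> length ?cs"
    using assms(5,6) by simp
  then have "card (h_words (set (take (f - i - 1) ?cs)) m (n - p)) = hfrak (n - p) (f - i - 1)"
    by (intro card_h_words_set_take) auto
  moreover have "{w. \<tau> @ m # w \<in> ifrak_seqs n m f} = h_words (set (take (f - i - 1) ?cs)) m (n - p)"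
    using append_max_mem_ifrak_seqs_iff[OF assms] by blast
  ultimately show ?thesis
    by simp
qed

lemma prefix_before_max_mem_ifrak_seqs:
  assumes s: "s \<in> ifrak_seqs n m f" and "n \<noteq> 0" "m \<noteq> 0"
  shows "m \<in> set s \<and> (\<exists>p i j. m < p \<and> p \<le> n \<and> i < f \<and> j < m \<and>
    takeWhile (\<lambda>y. y \<noteq> m) s \<in> ifrak_seqs (p - 1) j i)"
proof -
  let ?u = "takeWhile (\<lambda>y. y \<noteq> m) s"
  have inv: "inv_seq n s" and avoids: "avoids {pat010, pat210} s"
    and Max: "Max (set s) = m" and forb: "forb s {pat010, pat210} = f"
    using s by (auto simp: ifrak_seqs_def)
  have "s \<noteq> []"
    using inv \<open>n \<noteq> 0\<close> by (auto simp: inv_seq_def)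
  with Max have "m \<in> set s"
    using Max_in by fastforce
  define w where "w = tl (dropWhile (\<lambda>y. y \<noteq> m) s)"
  have s_eq: "s = ?u @ m # w"
    unfolding w_def using takeWhile_neq_append_Cons[OF \<open>m \<in> set s\<close>] .
  have u: "set ?u \<subseteq> {..<m}"
  proof
    fix x assume "x \<in> set ?u"
    then have "x \<in> set s" "x \<noteq> m"
      by (auto dest: set_takeWhileD)
    with Max show "x \<in> {..<m}"
      using Max_ge[of "set s" x] by auto
  qed
  have w: "set w \<subseteq> {..m}"
    using Max_append_max_iff[OF u, of w] Max s_eq by simp
  have len: "n = Suc (length ?u + length w)"
    using inv s_eq by (metis inv_seq_def length_Cons length_append add_Suc_right)
  with inv have "inv_seq (length ?u + length (m # w)) (?u @ m # w)"
    by (simp add: s_eq[symmetric])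
  then have "inv_seq (length ?u) ?u" and "m \<le> length ?u"
    unfolding inv_seq_append by auto
  moreover have avoids_u: "avoids {pat010, pat210} ?u"
    using avoids avoids_010_210_append_max[OF u w] s_eq by simp
  moreover have "forb ?u {pat010, pat210} < f"
    using forb forb_append_max[OF u w] avoids s_eq forb_eq_card_forb_set[OF avoids_u] by simp
  moreover have "?u \<noteq> []"
    using \<open>m \<le> length ?u\<close> \<open>m \<noteq> 0\<close> by auto
  then have "Max (set ?u) < m"
    using u by auto
  ultimately show ?thesis
    using \<open>m \<in> set s\<close> len
    by (intro conjI exI[of _ "Suc (length ?u)"] exI[of _ "forb ?u {pat010, pat210}"]
        exI[of _ "Max (set ?u)"]) (auto simp: ifrak_seqs_def)
qed

lemma ifrak_eq_sum_tails:
  assumes "n \<noteq> 0" "m \<noteq> 0"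
  shows "ifrak n m f = (\<Sum>(p, i, j) \<in> {m+1..n} \<times> {..<f} \<times> {..<m}.
    \<Sum>u \<in> ifrak_seqs (p - 1) j i. card {w. u @ m # w \<in> ifrak_seqs n m f})"
proof -
  define I where "I = {m+1..n} \<times> {..<f} \<times> {..<m}"
  define B where "B = (\<lambda>(p, i, j). ifrak_seqs (p - 1) j i)"
  let ?tails = "\<lambda>u. card {w. u @ m # w \<in> ifrak_seqs n m f}"
  have "ifrak n m f = card (ifrak_seqs n m f)"
    by (rule ifrak_eq_card_ifrak_seqs)
  also have "\<dots> = (\<Sum>u \<in> \<Union> (B ` I). ?tails u)"
  proof (rule card_eq_sum_split_first[OF finite_ifrak_seqs])
    show "finite (\<Union> (B ` I))"
      by (auto simp: I_def B_def finite_ifrak_seqs)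
    show "m \<notin> set u" if "u \<in> \<Union> (B ` I)" for u
      using that ifrak_seqs_below(1) by (fastforce simp: I_def B_def)
    show "m \<in> set s \<and> takeWhile (\<lambda>y. y \<noteq> m) s \<in> \<Union> (B ` I)" if "s \<in> ifrak_seqs n m f" for s
      using prefix_before_max_mem_ifrak_seqs[OF that] assms by (force simp: I_def B_def)
  qed
  also have "\<dots> = (\<Sum>x \<in> I. \<Sum>u \<in> B x. ?tails u)"
  proof (rule sum.UNION_disjoint)
    show "finite I" "\<forall>x \<in> I. finite (B x)"
      by (auto simp: I_def B_def finite_ifrak_seqs)
    show "\<forall>x \<in> I. \<forall>y \<in> I. x \<noteq> y \<longrightarrow> B x \<inter> B y = {}"
      by (fastforce simp: I_def B_def dest: ifrak_seqs_params_unique)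
  qed
  finally show ?thesis
    by (simp add: I_def B_def case_prod_beta)
qed

theorem mainTheorem10:
  fixes n m f :: nat
  assumes "n \<ge> 1" and "m \<ge> 1" and "f \<le> m + 1"
  shows "ifrak n m f =
    (\<Sum>p=m+1..n. \<Sum>i<f. \<Sum>j<m. ifrak (p - 1) j i * hfrak (n - p) (f - i - 1))"
proof -
  have "ifrak n m f = (\<Sum>(p, i, j) \<in> {m+1..n} \<times> {..<f} \<times> {..<m}.
      \<Sum>u \<in> ifrak_seqs (p - 1) j i. card {w. u @ m # w \<in> ifrak_seqs n m f})"
    using assms by (intro ifrak_eq_sum_tails) auto
  also have "\<dots> = (\<Sum>(p, i, j) \<in> {m+1..n} \<times> {..<f} \<times> {..<m}. ifrak (p - 1) j i * hfrak (n - p) (f - i - 1))"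
    using card_tails_eq_hfrak assms(3)
    by (intro sum.cong) (auto simp: ifrak_eq_card_ifrak_seqs)
  also have "\<dots> = (\<Sum>p=m+1..n. \<Sum>i<f. \<Sum>j<m. ifrak (p - 1) j i * hfrak (n - p) (f - i - 1))"
    by (simp add: sum.cartesian_product)
  finally show ?thesis .
qed

end
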